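(* Consider a $k$-party quantum communication protocol $\mathcal{P}=(U_1^{p_1}(x_{p_1}),\dots,U_r^{p_r}(x_{p_r}))$. The final state of $\mathcal{P}$ on input $x_1\in\mathcal{X}_1,\dots,x_k\in\mathcal{X}_k$ can be written as \[\sum_{i\in S}a_i^1(x_1)\,a_i^2(x_2)\cdots a_i^k(x_k)\,\ket{A_i^1(x_1)}\ket{A_i^2(x_2)}\cdots\ket{A_i^k(x_k)}\ket{f(i)},\] where $S=\{0,1\}^{C(\mathcal{P})}$, each $a_i^p(x_p)$ is a complex number depending only on $i$ and $x_p$, each $\ket{A_i^p(x_p)}$ is a unit vector in $H_p$ depending only on $i$ and $x_p$, and $f:S\to\overline{H}$ is a function (independent of the inputs) mapping each $i$ to a state in $\overline{H}$.
   Context: $k$-party quantum communication model: players $P_1,\dots,P_k$, Hilbert space (of qubits) $H=H_1\otimes\cdots\otimes H_k\otimes\overline{H}$ with $H_i$ private to $P_i$ and $\overline{H}$ the shared channel; $P_i$ receives $x_i\in\mathcal{X}_i$. A protocol is a sequence of unitaries $(U_1^{p_1}(x_{p_1}),\dots,U_r^{p_r}(x_{p_r}))$, $U_j^{p_j}(x_{p_j})$ depending only on $x_{p_j}$ and acting only on $H_{p_j}\otimes\overline{H_j}$, where $\overline{H_j}$ is spanned by some qubits of $\overline{H}$; the sequences $p_1,\dots,p_r$ and $\overline{H_1},\dots,\overline{H_r}$ are fixed independently of the inputs. The initial state is $\ket{0}$ and the final state is $U_r^{p_r}(x_{p_r})\cdots U_1^{p_1}(x_{p_1})\ket{0}$.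 Communication complexity $C(\mathcal{P})=\sum_{j=1}^r\log(\dim\overline{H_j})$. *)

theory Defs
  imports Complex_Main
begin

text \<open>Qubits of the whole system: private qubit j of player p, or channel qubit j.
  The Hilbert space spanned by a finite set T of qubits has computational basis the
  assignments T -> bool (extended by False outside T); vectors are functions from
  such assignments to complex numbers.\<close>

datatype qubit = Priv nat nat | Chan nat

type_synonym basis = "qubit \<Rightarrow> bool"
type_synonym vec = "basis \<Rightarrow> complex"
type_synonym matrix = "basis \<Rightarrow> basis \<Rightarrow> complex"

definition asg :: "qubit set \<Rightarrow> basis set" where
  "asg T = {b. \<forall>q. q \<notin> T \<longrightarrow> \<not> b q}"

definition restr :: "basis \<Rightarrow> qubit set \<Rightarrow> basis" where
  "restr b T = (\<lambda>q. q \<in> T \<and> b q)"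

definition overr :: "basis \<Rightarrow> basis \<Rightarrow> qubit set \<Rightarrow> basis" where
  "overr b c T = (\<lambda>q. if q \<in> T then c q else b q)"

text \<open>M is a unitary on the space of qubits T (M c a = matrix entry <c|M|a>).\<close>
definition unitary_on :: "qubit set \<Rightarrow> matrix \<Rightarrow> bool" where
  "unitary_on T M \<longleftrightarrow> (\<forall>a\<in>asg T. \<forall>b\<in>asg T.
      (\<Sum>c\<in>asg T. cnj (M c a) * M c b) = (if a = b then 1 else 0))"

text \<open>Apply M (acting on qubits T) tensored with the identity on all other qubits.\<close>
definition apply_op :: "qubit set \<Rightarrow> matrix \<Rightarrow> vec \<Rightarrow> vec" where
  "apply_op T M \<psi> = (\<lambda>b. \<Sum>c\<in>asg T. M (restr b T) c * \<psi> (overr b c T))"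

definition priv_reg :: "(nat \<Rightarrow> nat) \<Rightarrow> nat \<Rightarrow> qubit set" where
  "priv_reg n p = Priv p ` {..<n p}"

definition chan_reg :: "nat set \<Rightarrow> qubit set" where
  "chan_reg Q = Chan ` Q"

definition sys_reg :: "nat \<Rightarrow> (nat \<Rightarrow> nat) \<Rightarrow> nat \<Rightarrow> qubit set" where
  "sys_reg k n m = (\<Union>p<k. priv_reg n p) \<union> chan_reg {..<m}"

text \<open>A protocol step (p, Q, U): player p applies U(x_p) on H_p tensor the channel
  qubits Q. A protocol is a list of steps (p_j, Q_j, U_j); p_j and Q_j do not
  depend on the inputs.\<close>
type_synonym 'x step = "nat \<times> nat set \<times> ('x \<Rightarrow> matrix)"

definition valid_protocol ::
  "nat \<Rightarrow> (nat \<Rightarrow> nat) \<Rightarrow> nat \<Rightarrow> (nat \<Rightarrow> 'x set) \<Rightarrow> 'x step list \<Rightarrow> bool" where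
  "valid_protocol k n m X steps \<longleftrightarrow>
     (\<forall>(p, Q, U) \<in> set steps. p < k \<and> Q \<subseteq> {..<m} \<and>
        (\<forall>x\<in>X p. unitary_on (priv_reg n p \<union> chan_reg Q) (U x)))"

definition init_state :: vec where
  "init_state = (\<lambda>b. if b = (\<lambda>_. False) then 1 else 0)"

fun run :: "(nat \<Rightarrow> nat) \<Rightarrow> (nat \<Rightarrow> 'x) \<Rightarrow> 'x step list \<Rightarrow> vec \<Rightarrow> vec" where
  "run n x [] \<psi> = \<psi>"
| "run n x ((p, Q, U) # s) \<psi> = run n x s (apply_op (priv_reg n p \<union> chan_reg Q) (U (x p)) \<psi>)"

definition final_state :: "(nat \<Rightarrow> nat) \<Rightarrow> 'x step list \<Rightarrow> (nat \<Rightarrow> 'x) \<Rightarrow> vec" where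
  "final_state n steps x = run n x steps init_state"

text \<open>Communication complexity: sum of log dim of the channel parts = number of qubits.\<close>
definition comm_cost :: "'x step list \<Rightarrow> nat" where
  "comm_cost steps = sum_list (map (\<lambda>(p, Q, U). card Q) steps)"

definition unit_vec :: "qubit set \<Rightarrow> vec \<Rightarrow> bool" where
  "unit_vec T v \<longleftrightarrow> (\<Sum>c\<in>asg T. (cmod (v c))\<^sup>2) = 1"

end

theory Submission
  imports Defs
begin

text \<open>Along every branch of the protocol the channel stays in a computational basis state.
  Indeed, by induction over the protocol the state is a sum, over the possible contents of the
  channel qubits written so far, of product vectors \<open>|A\<^sub>1\<rangle> \<dots> |A\<^sub>k\<rangle> |g\<rangle>\<close> with \<open>g\<close> a channel
  basis state. A step in which player \<open>p\<close> applies \<open>U\<close> to \<open>H\<^sub>p\<close> and the channel qubits \<open>Q\<close> leaves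
  the other factors alone and splits each branch according to the new content \<open>c\<close> of \<open>Q\<close>,
  replacing \<open>|A\<^sub>p\<rangle>\<close> by \<open>\<langle>c| U (|A\<^sub>p\<rangle> |g|\<^sub>Q\<rangle>)\<close>. After all steps there are \<open>2\<^bsup>C(P)\<^esup>\<close> branches,
  and normalising the private factors yields the coefficients.\<close>

definition ket :: "basis \<Rightarrow> vec" where
  "ket g = (\<lambda>c. if c = g then 1 else 0)"

lemma asg_eq_image_Pow: "asg T = (\<lambda>S q. q \<in> S) ` Pow T"
proof
  show "asg T \<subseteq> (\<lambda>S q. q \<in> S) ` Pow T"
  proof
    fix b assume "b \<in> asg T"
    then have "b = (\<lambda>q. q \<in> {q. b q})" "{q. b q} \<in> Pow T" by (auto simp: asg_def)
    then show "b \<in> (\<lambda>S q. q \<in> S) ` Pow T" by blast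
  qed
qed (auto simp: asg_def)

lemma finite_asg: "finite T \<Longrightarrow> finite (asg T)"
  by (simp add: asg_eq_image_Pow)

lemma card_asg:
  assumes "finite T"
  shows "card (asg T) = 2 ^ card T"
proof -
  have "inj_on (\<lambda>S q. q \<in> S) (Pow T)" by (auto simp: inj_on_def fun_eq_iff)
  with assms show ?thesis by (simp add: asg_eq_image_Pow card_image card_Pow)
qed

lemma restr_in_asg [simp]: "restr b T \<in> asg T"
  by (simp add: restr_def asg_def)

lemma overr_in_asg: "b \<in> asg S \<Longrightarrow> c \<in> asg T \<Longrightarrow> T \<subseteq> S \<Longrightarrow> overr b c T \<in> asg S"
  by (auto simp: overr_def asg_def)

lemma restr_overr_disjoint: "S \<inter> T = {} \<Longrightarrow> restr (overr b c T) S = restr b S"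
  by (auto simp: restr_def overr_def fun_eq_iff)

lemma restr_overr_subset: "S \<subseteq> T \<Longrightarrow> restr (overr b c T) S = restr c S"
  by (auto simp: restr_def overr_def fun_eq_iff)

lemma finite_priv_reg [simp]: "finite (priv_reg n p)"
  by (simp add: priv_reg_def)

lemma finite_chan_reg [simp]: "finite Q \<Longrightarrow> finite (chan_reg Q)"
  by (simp add: chan_reg_def)

lemma card_chan_reg: "card (chan_reg Q) = card Q"
  by (simp add: chan_reg_def card_image inj_on_def)

lemma priv_reg_disjoint_chan_reg: "priv_reg n p \<inter> chan_reg Q = {}"
  unfolding priv_reg_def chan_reg_def by blast

lemma priv_reg_disjoint: "p \<noteq> p' \<Longrightarrow> priv_reg n p \<inter> priv_reg n p' = {}"
  unfolding priv_reg_def by blast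

lemma zero_eq_iff_restr_sys_reg:
  assumes "b \<in> asg (sys_reg k n m)"
  shows "b = (\<lambda>_. False) \<longleftrightarrow>
    (\<forall>p<k. restr b (priv_reg n p) = (\<lambda>_. False)) \<and> restr b (chan_reg {..<m}) = (\<lambda>_. False)"
  using assms unfolding sys_reg_def asg_def restr_def fun_eq_iff by auto

lemma ket_restr_overr:
  assumes "T \<inter> C = Q" "g \<in> asg C"
  shows "ket g (restr (overr b c T) C) =
    ket (restr g Q) (restr c Q) * ket (overr g (restr b Q) Q) (restr b C)"
  using assms unfolding ket_def restr_def overr_def asg_def fun_eq_iff by auto

lemma ket_overr_restr:
  assumes "Q \<subseteq> C" "g \<in> asg C" "c \<in> asg Q"
  shows "ket (overr g c Q) (restr b C) =
    (if c = restr b Q then ket (overr g (restr b Q) Q) (restr b C) else 0)"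
  using assms unfolding ket_def restr_def overr_def asg_def fun_eq_iff by auto

lemma unit_vec_ket:
  assumes "finite T" "g \<in> asg T"
  shows "unit_vec T (ket g)"
proof -
  have "(cmod (ket g c))\<^sup>2 = (if c = g then 1 else 0)" for c by (simp add: ket_def)
  with assms show ?thesis by (simp add: unit_vec_def finite_asg)
qed

definition vnorm :: "qubit set \<Rightarrow> vec \<Rightarrow> real" where
  "vnorm T v = sqrt (\<Sum>c\<in>asg T. (cmod (v c))\<^sup>2)"

definition normalize_vec :: "qubit set \<Rightarrow> vec \<Rightarrow> vec" where
  "normalize_vec T v = (if vnorm T v = 0 then ket (\<lambda>_. False) else (\<lambda>c. v c / vnorm T v))"

lemma unit_vec_normalize_vec:
  assumes "finite T"
  shows "unit_vec T (normalize_vec T v)"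
proof (cases "vnorm T v = 0")
  case True
  have "(\<lambda>_. False) \<in> asg T" by (simp add: asg_def)
  with assms True show ?thesis by (simp add: normalize_vec_def unit_vec_ket)
next
  case False
  define s where "s = (\<Sum>c\<in>asg T. (cmod (v c))\<^sup>2)"
  have "s \<ge> 0" unfolding s_def by (intro sum_nonneg) auto
  then have "(\<Sum>c\<in>asg T. (cmod (v c / vnorm T v))\<^sup>2) = (\<Sum>c\<in>asg T. (cmod (v c))\<^sup>2 / s)"
    by (simp add: vnorm_def s_def norm_divide power_divide)
  also have "\<dots> = s / s" unfolding s_def by (rule sum_divide_distrib[symmetric])
  also have "\<dots> = 1" using False by (simp add: vnorm_def flip: s_def)
  finally show ?thesis using False by (simp add: unit_vec_def normalize_vec_def)
qed

lemma vnorm_mult_normalize_vec: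
  assumes "finite T" "c \<in> asg T"
  shows "vnorm T v * normalize_vec T v c = v c"
proof (cases "vnorm T v = 0")
  case True
  then have "\<forall>c\<in>asg T. (cmod (v c))\<^sup>2 = 0"
    using assms(1) by (simp add: vnorm_def finite_asg sum_nonneg_eq_0_iff)
  with True assms(2) show ?thesis by simp
next
  case False
  then show ?thesis by (simp add: normalize_vec_def)
qed

lemma apply_op_cong:
  assumes "b \<in> asg S" "T \<subseteq> S" "\<And>b'. b' \<in> asg S \<Longrightarrow> \<phi> b' = \<psi> b'"
  shows "apply_op T M \<phi> b = apply_op T M \<psi> b"
  using assms by (simp add: apply_op_def overr_in_asg)

lemma apply_op_sum: "apply_op T M (\<lambda>b. \<Sum>i\<in>I. \<phi> i b) b = (\<Sum>i\<in>I. apply_op T M (\<phi> i) b)"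
  unfolding apply_op_def sum_distrib_left by (rule sum.swap)

definition product_state :: "nat \<Rightarrow> (nat \<Rightarrow> nat) \<Rightarrow> nat \<Rightarrow> (nat \<Rightarrow> vec) \<Rightarrow> basis \<Rightarrow> vec" where
  "product_state k n m F g b =
     (\<Prod>p<k. F p (restr b (priv_reg n p))) * ket g (restr b (chan_reg {..<m}))"

text \<open>\<open>\<langle>c|\<^sub>C M (v \<otimes> |g\<rangle>\<^sub>C)\<close>: the private state left when \<open>M\<close> acts on \<open>v \<otimes> |g\<rangle>\<close> and the qubits
  \<open>C\<close> are then found in the basis state \<open>c\<close>.\<close>
definition project_channel :: "qubit set \<Rightarrow> qubit set \<Rightarrow> matrix \<Rightarrow> basis \<Rightarrow> basis \<Rightarrow> vec \<Rightarrow> vec" where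
  "project_channel P C M c g v =
     (\<lambda>d. \<Sum>e\<in>asg (P \<union> C). M (\<lambda>q. d q \<or> c q) e * v (restr e P) * ket g (restr e C))"

text \<open>Both sides vanish unless \<open>b\<close> agrees with \<open>g\<close> on the channel outside \<open>Q\<close>; the sum on the right
  then collapses to its term \<open>c = b|\<^sub>Q\<close>.\<close>
lemma apply_op_product_state:
  assumes "p < k" "Q \<subseteq> {..<m}" "b \<in> asg (sys_reg k n m)" "g \<in> asg (chan_reg {..<m})"
  shows "apply_op (priv_reg n p \<union> chan_reg Q) M (product_state k n m F g) b =
    (\<Sum>c\<in>asg (chan_reg Q). product_state k n m
        (F(p := project_channel (priv_reg n p) (chan_reg Q) M c (restr g (chan_reg Q)) (F p)))
        (overr g c (chan_reg Q)) b)"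
proof -
  let ?P = "priv_reg n p" and ?C = "chan_reg Q" and ?Ch = "chan_reg {..<m}"
  let ?T = "?P \<union> ?C" and ?others = "{..<k} - {p}"
  let ?proj = "\<lambda>c. project_channel ?P ?C M c (restr g ?C) (F p)"
  define rest where "rest = (\<Prod>p'\<in>?others. F p' (restr b (priv_reg n p')))
    * ket (overr g (restr b ?C) ?C) (restr b ?Ch)"
  have prod_split: "(\<Prod>p'<k. G p' (restr b' (priv_reg n p'))) =
      G p (restr b' ?P) * (\<Prod>p'\<in>?others. G p' (restr b' (priv_reg n p')))" for G b'
    using assms(1) by (simp add: prod.remove)
  have lhs_term: "product_state k n m F g (overr b e ?T) =
      F p (restr e ?P) * ket (restr g ?C) (restr e ?C) * rest" for e
  proof -
    have "priv_reg n p' \<inter> ?T = {}" if "p' \<in> ?others" for p'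
      using that priv_reg_disjoint[of p p' n] priv_reg_disjoint_chan_reg[of n p' Q] by auto
    then have "(\<Prod>p'\<in>?others. F p' (restr (overr b e ?T) (priv_reg n p'))) =
        (\<Prod>p'\<in>?others. F p' (restr b (priv_reg n p')))"
      by (intro prod.cong) (simp_all add: restr_overr_disjoint)
    moreover have "?T \<inter> ?Ch = ?C"
      using assms(2) priv_reg_disjoint_chan_reg[of n p "{..<m}"] by (auto simp: chan_reg_def)
    ultimately show ?thesis using assms(4)
      by (simp add: product_state_def prod_split restr_overr_subset ket_restr_overr rest_def)
  qed
  have rhs_term: "product_state k n m (F(p := ?proj c)) (overr g c ?C) b =
      (if c = restr b ?C then ?proj c (restr b ?P) * rest else 0)" if "c \<in> asg ?C" for c
  proof -
    have "?C \<subseteq> ?Ch" using assms(2) by (auto simp: chan_reg_def)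
    note ket_overr_restr[OF this assms(4) that, of b]
    moreover have "(\<Prod>p'\<in>?others. (F(p := ?proj c)) p' (restr b (priv_reg n p'))) =
        (\<Prod>p'\<in>?others. F p' (restr b (priv_reg n p')))"
      by (intro prod.cong) simp_all
    ultimately show ?thesis
      unfolding product_state_def prod_split[of "F(p := ?proj c)"] by (simp add: rest_def)
  qed
  have "restr b ?T = (\<lambda>q. restr b ?P q \<or> restr b ?C q)"
    by (auto simp: restr_def fun_eq_iff)
  then have "apply_op ?T M (product_state k n m F g) b = ?proj (restr b ?C) (restr b ?P) * rest"
    by (simp add: apply_op_def lhs_term project_channel_def sum_distrib_right mult.assoc)
  also have "\<dots> = (\<Sum>c\<in>asg ?C. if c = restr b ?C then ?proj c (restr b ?P) * rest else 0)"
    using assms(2) by (simp add: finite_asg finite_subset)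
  also have "\<dots> = (\<Sum>c\<in>asg ?C. product_state k n m (F(p := ?proj c)) (overr g c ?C) b)"
    by (intro sum.cong) (simp_all add: rhs_term)
  finally show ?thesis .
qed

definition product_expansion :: "nat \<Rightarrow> (nat \<Rightarrow> nat) \<Rightarrow> nat \<Rightarrow> 'i set \<Rightarrow>
    (nat \<Rightarrow> 'i \<Rightarrow> 'x \<Rightarrow> vec) \<Rightarrow> ('i \<Rightarrow> basis) \<Rightarrow> ((nat \<Rightarrow> 'x) \<Rightarrow> vec) \<Rightarrow> bool" where
  "product_expansion k n m I A g \<Psi> \<longleftrightarrow> finite I \<and> g ` I \<subseteq> asg (chan_reg {..<m}) \<and>
     (\<forall>x. \<forall>b\<in>asg (sys_reg k n m). \<Psi> x b = (\<Sum>i\<in>I. product_state k n m (\<lambda>p. A p i (x p)) (g i) b))"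

lemma product_expansion_init_state:
  "product_expansion k n m {[]} (\<lambda>p i xp. ket (\<lambda>_. False)) (\<lambda>i. (\<lambda>_. False)) (\<lambda>x. init_state)"
proof -
  have "init_state b = product_state k n m (\<lambda>p. ket (\<lambda>_. False)) (\<lambda>_. False) b"
    if "b \<in> asg (sys_reg k n m)" for b
    using zero_eq_iff_restr_sys_reg[OF that]
    by (auto simp: init_state_def product_state_def ket_def prod_zero_iff)
  then show ?thesis by (simp add: product_expansion_def asg_def)
qed

lemma product_expansion_apply_op:
  fixes I :: "basis list set"
  assumes "p < k" "Q \<subseteq> {..<m}" and exp: "product_expansion k n m I A g \<Psi>"
  shows "product_expansion k n m ((\<lambda>(c, i). c # i) ` (asg (chan_reg Q) \<times> I))
     (\<lambda>p' ci xp. if p' = p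
        then project_channel (priv_reg n p) (chan_reg Q) (U xp) (hd ci)
          (restr (g (tl ci)) (chan_reg Q)) (A p (tl ci) xp)
        else A p' (tl ci) xp)
     (\<lambda>ci. overr (g (tl ci)) (hd ci) (chan_reg Q))
     (\<lambda>x. apply_op (priv_reg n p \<union> chan_reg Q) (U (x p)) (\<Psi> x))"
    (is "product_expansion k n m ?I' ?A' ?g' ?\<Psi>'")
proof -
  let ?P = "priv_reg n p" and ?C = "chan_reg Q" and ?Ch = "chan_reg {..<m}"
  let ?proj = "\<lambda>x c i. project_channel ?P ?C (U (x p)) c (restr (g i) ?C) (A p i (x p))"
  have finite_C: "finite (asg ?C)" using assms(2) by (simp add: finite_asg finite_subset)
  have C_Ch: "?C \<subseteq> ?Ch" using assms(2) by (auto simp: chan_reg_def)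
  have T_sys: "?P \<union> ?C \<subseteq> sys_reg k n m" using assms(1,2) by (auto simp: sys_reg_def chan_reg_def)
  have g_I: "g i \<in> asg ?Ch" if "i \<in> I" for i using exp that by (auto simp: product_expansion_def)
  have inj: "inj_on (\<lambda>(c, i). c # i) (asg ?C \<times> I)" by (auto simp: inj_on_def)
  have "?\<Psi>' x b = (\<Sum>ci\<in>?I'. product_state k n m (\<lambda>p'. ?A' p' ci (x p')) (?g' ci) b)"
    if b: "b \<in> asg (sys_reg k n m)" for x b
  proof -
    have "?\<Psi>' x b = apply_op (?P \<union> ?C) (U (x p))
        (\<lambda>b. \<Sum>i\<in>I. product_state k n m (\<lambda>p. A p i (x p)) (g i) b) b"
      using exp b T_sys by (intro apply_op_cong) (auto simp: product_expansion_def)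
    also have "\<dots> = (\<Sum>i\<in>I. \<Sum>c\<in>asg ?C. product_state k n m
        ((\<lambda>p. A p i (x p))(p := ?proj x c i)) (overr (g i) c ?C) b)"
      using assms(1,2) b g_I by (simp add: apply_op_sum apply_op_product_state)
    also have "\<dots> = (\<Sum>(c, i)\<in>asg ?C \<times> I. product_state k n m
        ((\<lambda>p. A p i (x p))(p := ?proj x c i)) (overr (g i) c ?C) b)"
      by (rule trans[OF sum.swap sum.cartesian_product])
    also have "\<dots> = (\<Sum>ci\<in>?I'. product_state k n m (\<lambda>p'. ?A' p' ci (x p')) (?g' ci) b)"
      unfolding sum.reindex[OF inj]
      by (intro sum.cong refl)
        (auto simp: fun_eq_iff intro!: arg_cong[where f = "\<lambda>F. product_state k n m F _ b"])
    finally show ?thesis .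
  qed
  moreover have "?g' ` ?I' \<subseteq> asg ?Ch" using g_I C_Ch by (auto simp: overr_in_asg)
  ultimately show ?thesis using exp finite_C by (simp add: product_expansion_def)
qed

lemma product_expansion_run:
  fixes I :: "basis list set"
  assumes "\<forall>(p, Q, U)\<in>set s. p < k \<and> Q \<subseteq> {..<m}" "product_expansion k n m I A g \<Psi>"
  shows "\<exists>(I' :: basis list set) A' g'. product_expansion k n m I' A' g' (\<lambda>x. run n x s (\<Psi> x)) \<and>
    card I' = 2 ^ comm_cost s * card I"
  using assms
proof (induction s arbitrary: I A g \<Psi>)
  case Nil
  then show ?case by (auto simp: comm_cost_def intro!: exI[of _ I])
next
  case (Cons st s)
  obtain p Q U where st: "st = (p, Q, U)" by (cases st)
  let ?I = "(\<lambda>(c, i). c # i) ` (asg (chan_reg Q) \<times> I)"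
  from st Cons.prems(1) have "p < k" "Q \<subseteq> {..<m}" by auto
  from product_expansion_apply_op[OF this Cons.prems(2), of U]
  obtain A' g' where step: "product_expansion k n m ?I A' g'
      (\<lambda>x. apply_op (priv_reg n p \<union> chan_reg Q) (U (x p)) (\<Psi> x))" by blast
  have "\<forall>(p, Q, U)\<in>set s. p < k \<and> Q \<subseteq> {..<m}" using Cons.prems(1) by simp
  from Cons.IH[OF this step] obtain I'' :: "basis list set" and A'' g'' where
    "product_expansion k n m I'' A'' g'' (\<lambda>x. run n x (st # s) (\<Psi> x))"
    "card I'' = 2 ^ comm_cost s * card ?I"
    by (auto simp: st)
  moreover have "inj_on (\<lambda>(c, i). c # i) (asg (chan_reg Q) \<times> I)" by (auto simp: inj_on_def)
  then have "card ?I = 2 ^ card Q * card I"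
    using \<open>Q \<subseteq> {..<m}\<close> Cons.prems(2)
    by (simp add: card_image card_cartesian_product card_asg card_chan_reg finite_subset)
  moreover have "comm_cost (st # s) = card Q + comm_cost s" by (simp add: comm_cost_def st)
  ultimately show ?case by (auto simp: power_add mult_ac intro!: exI[of _ I''])
qed

lemma product_expansion_reindex:
  assumes "product_expansion k n m I A g \<Psi>" "bij_betw h J I"
  shows "product_expansion k n m J (\<lambda>p j. A p (h j)) (g \<circ> h) \<Psi>"
proof -
  have "(\<Sum>j\<in>J. product_state k n m (\<lambda>p. A p (h j) (x p)) ((g \<circ> h) j) b) =
      (\<Sum>i\<in>I. product_state k n m (\<lambda>p. A p i (x p)) (g i) b)" for x b
    using sum.reindex_bij_betw[OF assms(2), of "\<lambda>i. product_state k n m (\<lambda>p. A p i (x p)) (g i) b"]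
    by simp
  moreover have "(g \<circ> h) ` J = g ` I"
    using bij_betw_imp_surj_on[OF assms(2)] by (metis image_comp)
  ultimately show ?thesis
    using assms unfolding product_expansion_def by (simp add: bij_betw_finite)
qed

lemma final_state_product_expansion:
  assumes "valid_protocol k n m X steps"
  shows "\<exists>B g. product_expansion k n m {i :: bool list. length i = comm_cost steps} B g
    (final_state n steps)"
proof -
  let ?L = "{i :: bool list. length i = comm_cost steps}"
  have "\<forall>(p, Q, U)\<in>set steps. p < k \<and> Q \<subseteq> {..<m}"
    using assms by (auto simp: valid_protocol_def)
  from product_expansion_run[OF this product_expansion_init_state[of k n m]]
  obtain I :: "basis list set" and B g
    where exp: "product_expansion k n m I B g (final_state n steps)" and "card I = 2 ^ comm_cost steps"
    unfolding final_state_def[abs_def] by auto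
  moreover have "finite ?L" "card ?L = 2 ^ comm_cost steps"
    using finite_lists_length_eq[of "UNIV :: bool set"] card_lists_length_eq[of "UNIV :: bool set"]
    by simp_all
  ultimately obtain h where "bij_betw h ?L I"
    by (metis finite_same_card_bij product_expansion_def)
  from product_expansion_reindex[OF exp this] show ?thesis by blast
qed

theorem mainTheorem3:
  fixes k m :: nat and n :: "nat \<Rightarrow> nat" and X :: "nat \<Rightarrow> 'x set"
    and steps :: "'x step list"
  assumes "valid_protocol k n m X steps"
  shows "\<exists>(a :: nat \<Rightarrow> bool list \<Rightarrow> 'x \<Rightarrow> complex)
           (A :: nat \<Rightarrow> bool list \<Rightarrow> 'x \<Rightarrow> vec) (f :: bool list \<Rightarrow> vec).
     (\<forall>p<k. \<forall>i. length i = comm_cost steps \<longrightarrow>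
         (\<forall>xp\<in>X p. unit_vec (priv_reg n p) (A p i xp))) \<and>
     (\<forall>i. length i = comm_cost steps \<longrightarrow> unit_vec (chan_reg {..<m}) (f i)) \<and>
     (\<forall>x. (\<forall>p<k. x p \<in> X p) \<longrightarrow>
        (\<forall>b\<in>asg (sys_reg k n m).
           final_state n steps x b =
           (\<Sum>i\<in>{i :: bool list. length i = comm_cost steps}.
              (\<Prod>p<k. a p i (x p) * A p i (x p) (restr b (priv_reg n p)))
              * f i (restr b (chan_reg {..<m})))))"
proof -
  let ?L = "{i :: bool list. length i = comm_cost steps}"
  from final_state_product_expansion[OF assms]
  obtain B g where exp: "product_expansion k n m ?L B g (final_state n steps)" by blast
  show ?thesis
  proof (intro exI conjI allI impI ballI)
    fix p i xp
    show "unit_vec (priv_reg n p) (normalize_vec (priv_reg n p) (B p i xp))"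
      by (simp add: unit_vec_normalize_vec)
  next
    fix i :: "bool list" assume "length i = comm_cost steps"
    with exp show "unit_vec (chan_reg {..<m}) (ket (g i))"
      by (auto simp: product_expansion_def image_subset_iff intro!: unit_vec_ket)
  next
    fix x b assume "b \<in> asg (sys_reg k n m)"
    with exp show "final_state n steps x b = (\<Sum>i\<in>?L.
        (\<Prod>p<k. vnorm (priv_reg n p) (B p i (x p))
           * normalize_vec (priv_reg n p) (B p i (x p)) (restr b (priv_reg n p)))
        * ket (g i) (restr b (chan_reg {..<m})))"
      by (simp add: product_expansion_def product_state_def vnorm_mult_normalize_vec)
  qed
qed

end
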